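(* (1) If $\mathfrak G$ is a descriptive $\multimap$-frame, then $\hat\sigma\mathfrak G$ is a descriptive S4K-frame. (2) If $\mathfrak F$ is a descriptive S4K-frame, then $\hat\rho\mathfrak F$ is a descriptive $\multimap$-frame.
   Context: General $\multimap$-frame $(X,\preceq,\sqsubset,P)$: $\preceq$ partial order, $x\preceq y\sqsubset z\Rightarrow x\sqsubset z$, $P$ a family of $\preceq$-upsets containing $X,\emptyset$, closed under $\cap,\cup$, $a\Rightarrow b=\{x\mid\forall y(x\preceq y,y\in a\Rightarrow y\in b)\}$, $a\Rrightarrow b=\{x\mid\forall y(x\sqsubset y,y\in a\Rightarrow y\in b)\}$. It is descriptive if compact (any subfamily of $P\cup\{X\setminus a\mid a\in P\}$ with the finite intersection property has nonempty intersection), $\preceq$-refined ($x\not\preceq y\Rightarrow\exists a\in P$, $x\in a$, $y\notin a$) and $\sqsubset$-refined (not $x\sqsubset y\Rightarrow\exists a,b\in P$ with $x\in a\Rrightarrow b$, $y\in a$, $y\notin b$). General S4K-frame $(X,R_i,R_m,P)$: $R_i$ preorder, $R_m$ binary relation, $P$ Boolean subalgebra of $\mathcal P(X)$ closed under $[i]a=\{x\mid\forall y(xR_iy\Rightarrow y\in a)\}$ and $[m]a$ (likewise with $R_m$). It is descriptive if differentiated ($x\ne y\Rightarrow\exists a\in P$, $x\in a$, $y\notin a$), tight (for $R\in\{R_i,R_m\}$: $xRy$ iff for all $a\in P$, $x\in[R]a$ implies $y\in a$) and compact (every subfamily of $P$ with the finite intersection property has nonempty intersection). $\hat\sigma(X,\preceq,\sqsubset,P):=(X,\preceq,\sqsubset,\hat\sigma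 P)$ with $\hat\sigma P$ the Boolean algebra generated by $P$. For $\mathfrak F=(X,R_i,R_m,P)$: $xR_m^*z$ iff $\exists y(xR_iy\wedge yR_mz)$; $x\sim y$ iff $xR_iy\wedge yR_ix$; $[x]$ its class, $[X]$ the set of classes; $[x][R_i][y]$ iff $xR_iy$; $[x][R_m^*][y]$ iff $xR_m^*y'$ for some $y'\sim y$; $\hat\rho P:=\{\{[x]\mid x\in[i]b\}\mid b\in P\}$; $\hat\rho\mathfrak F:=([X],[R_i],[R_m^*],\hat\rho P)$. *)

theory Defs
  imports Main
begin

definition fip :: "'a set \<Rightarrow> 'a set set \<Rightarrow> bool" where
  "fip X F \<longleftrightarrow> (\<forall>G. G \<subseteq> F \<and> finite G \<longrightarrow> X \<inter> \<Inter>G \<noteq> {})"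

definition upset :: "'a set \<Rightarrow> ('a \<Rightarrow> 'a \<Rightarrow> bool) \<Rightarrow> 'a set \<Rightarrow> bool" where
  "upset X le a \<longleftrightarrow> a \<subseteq> X \<and> (\<forall>x y. x \<in> a \<and> le x y \<longrightarrow> y \<in> a)"

definition imp_le :: "'a set \<Rightarrow> ('a \<Rightarrow> 'a \<Rightarrow> bool) \<Rightarrow> 'a set \<Rightarrow> 'a set \<Rightarrow> 'a set" where
  "imp_le X le a b = {x \<in> X. \<forall>y. le x y \<and> y \<in> a \<longrightarrow> y \<in> b}"

definition imp_sq :: "'a set \<Rightarrow> ('a \<Rightarrow> 'a \<Rightarrow> bool) \<Rightarrow> 'a set \<Rightarrow> 'a set \<Rightarrow> 'a set" where
  "imp_sq X sq a b = {x \<in> X. \<forall>y. sq x y \<and> y \<in> a \<longrightarrow> y \<in> b}"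

definition general_mframe ::
  "'a set \<Rightarrow> ('a \<Rightarrow> 'a \<Rightarrow> bool) \<Rightarrow> ('a \<Rightarrow> 'a \<Rightarrow> bool) \<Rightarrow> 'a set set \<Rightarrow> bool" where
  "general_mframe X le sq P \<longleftrightarrow>
     (\<forall>x y. le x y \<longrightarrow> x \<in> X \<and> y \<in> X) \<and>
     (\<forall>x y. sq x y \<longrightarrow> x \<in> X \<and> y \<in> X) \<and>
     (\<forall>x\<in>X. le x x) \<and>
     (\<forall>x y z. le x y \<and> le y z \<longrightarrow> le x z) \<and>
     (\<forall>x y. le x y \<and> le y x \<longrightarrow> x = y) \<and>
     (\<forall>x y z. le x y \<and> sq y z \<longrightarrow> sq x z) \<and>
     (\<forall>a\<in>P. upset X le a) \<and> X \<in> P \<and> {} \<in> P \<and>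
     (\<forall>a\<in>P. \<forall>b\<in>P. a \<inter> b \<in> P \<and> a \<union> b \<in> P \<and>
                      imp_le X le a b \<in> P \<and> imp_sq X sq a b \<in> P)"

definition descriptive_mframe ::
  "'a set \<Rightarrow> ('a \<Rightarrow> 'a \<Rightarrow> bool) \<Rightarrow> ('a \<Rightarrow> 'a \<Rightarrow> bool) \<Rightarrow> 'a set set \<Rightarrow> bool" where
  "descriptive_mframe X le sq P \<longleftrightarrow>
     general_mframe X le sq P \<and>
     (\<forall>F. F \<subseteq> P \<union> {X - a | a. a \<in> P} \<and> fip X F \<longrightarrow> X \<inter> \<Inter>F \<noteq> {}) \<and>
     (\<forall>x\<in>X. \<forall>y\<in>X. \<not> le x y \<longrightarrow> (\<exists>a\<in>P. x \<in> a \<and> y \<notin> a)) \<and>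
     (\<forall>x\<in>X. \<forall>y\<in>X. \<not> sq x y \<longrightarrow>
        (\<exists>a\<in>P. \<exists>b\<in>P. x \<in> imp_sq X sq a b \<and> y \<in> a \<and> y \<notin> b))"

definition box :: "'a set \<Rightarrow> ('a \<Rightarrow> 'a \<Rightarrow> bool) \<Rightarrow> 'a set \<Rightarrow> 'a set" where
  "box X R a = {x \<in> X. \<forall>y. R x y \<longrightarrow> y \<in> a}"

definition general_S4K ::
  "'a set \<Rightarrow> ('a \<Rightarrow> 'a \<Rightarrow> bool) \<Rightarrow> ('a \<Rightarrow> 'a \<Rightarrow> bool) \<Rightarrow> 'a set set \<Rightarrow> bool" where
  "general_S4K X Ri Rm P \<longleftrightarrow>
     (\<forall>x y. Ri x y \<longrightarrow> x \<in> X \<and> y \<in> X) \<and>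
     (\<forall>x y. Rm x y \<longrightarrow> x \<in> X \<and> y \<in> X) \<and>
     (\<forall>x\<in>X. Ri x x) \<and>
     (\<forall>x y z. Ri x y \<and> Ri y z \<longrightarrow> Ri x z) \<and>
     P \<subseteq> Pow X \<and> {} \<in> P \<and> X \<in> P \<and>
     (\<forall>a\<in>P. X - a \<in> P \<and> box X Ri a \<in> P \<and> box X Rm a \<in> P) \<and>
     (\<forall>a\<in>P. \<forall>b\<in>P. a \<inter> b \<in> P \<and> a \<union> b \<in> P)"

definition descriptive_S4K ::
  "'a set \<Rightarrow> ('a \<Rightarrow> 'a \<Rightarrow> bool) \<Rightarrow> ('a \<Rightarrow> 'a \<Rightarrow> bool) \<Rightarrow> 'a set set \<Rightarrow> bool" where
  "descriptive_S4K X Ri Rm P \<longleftrightarrow>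
     general_S4K X Ri Rm P \<and>
     (\<forall>x\<in>X. \<forall>y\<in>X. x \<noteq> y \<longrightarrow> (\<exists>a\<in>P. x \<in> a \<and> y \<notin> a)) \<and>
     (\<forall>x\<in>X. \<forall>y\<in>X. Ri x y \<longleftrightarrow> (\<forall>a\<in>P. x \<in> box X Ri a \<longrightarrow> y \<in> a)) \<and>
     (\<forall>x\<in>X. \<forall>y\<in>X. Rm x y \<longleftrightarrow> (\<forall>a\<in>P. x \<in> box X Rm a \<longrightarrow> y \<in> a)) \<and>
     (\<forall>F. F \<subseteq> P \<and> fip X F \<longrightarrow> X \<inter> \<Inter>F \<noteq> {})"

inductive_set sigma_hat :: "'a set \<Rightarrow> 'a set set \<Rightarrow> 'a set set"
  for X :: "'a set" and P :: "'a set set" where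
  gen: "a \<in> P \<Longrightarrow> a \<in> sigma_hat X P"
| top: "X \<in> sigma_hat X P"
| compl: "a \<in> sigma_hat X P \<Longrightarrow> X - a \<in> sigma_hat X P"
| inter: "a \<in> sigma_hat X P \<Longrightarrow> b \<in> sigma_hat X P \<Longrightarrow> a \<inter> b \<in> sigma_hat X P"
| union: "a \<in> sigma_hat X P \<Longrightarrow> b \<in> sigma_hat X P \<Longrightarrow> a \<union> b \<in> sigma_hat X P"

definition Rm_star :: "('a \<Rightarrow> 'a \<Rightarrow> bool) \<Rightarrow> ('a \<Rightarrow> 'a \<Rightarrow> bool) \<Rightarrow> 'a \<Rightarrow> 'a \<Rightarrow> bool" where
  "Rm_star Ri Rm x z \<longleftrightarrow> (\<exists>y. Ri x y \<and> Rm y z)"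

definition equiv_cls :: "'a set \<Rightarrow> ('a \<Rightarrow> 'a \<Rightarrow> bool) \<Rightarrow> 'a \<Rightarrow> 'a set" where
  "equiv_cls X Ri x = {y \<in> X. Ri x y \<and> Ri y x}"

definition classes :: "'a set \<Rightarrow> ('a \<Rightarrow> 'a \<Rightarrow> bool) \<Rightarrow> 'a set set" where
  "classes X Ri = equiv_cls X Ri ` X"

definition rho_Ri :: "'a set \<Rightarrow> ('a \<Rightarrow> 'a \<Rightarrow> bool) \<Rightarrow> 'a set \<Rightarrow> 'a set \<Rightarrow> bool" where
  "rho_Ri X Ri c d \<longleftrightarrow> (\<exists>x\<in>X. \<exists>y\<in>X. c = equiv_cls X Ri x \<and> d = equiv_cls X Ri y \<and> Ri x y)"

definition rho_Rm :: "'a set \<Rightarrow> ('a \<Rightarrow> 'a \<Rightarrow> bool) \<Rightarrow> ('a \<Rightarrow> 'a \<Rightarrow> bool) \<Rightarrow> 'a set \<Rightarrow> 'a set \<Rightarrow> bool" where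
  "rho_Rm X Ri Rm c d \<longleftrightarrow> (\<exists>x\<in>X. \<exists>y\<in>X. c = equiv_cls X Ri x \<and> d = equiv_cls X Ri y \<and>
      (\<exists>y'\<in>X. Ri y' y \<and> Ri y y' \<and> Rm_star Ri Rm x y'))"

definition rho_P :: "'a set \<Rightarrow> ('a \<Rightarrow> 'a \<Rightarrow> bool) \<Rightarrow> 'a set set \<Rightarrow> 'a set set set" where
  "rho_P X Ri P = {equiv_cls X Ri ` box X Ri b | b. b \<in> P}"

end

theory Submission
  imports Defs
begin

text \<open>
  (1) Every element of the Boolean algebra generated by \<open>P\<close> is a finite meet of clauses
  \<open>(X - a) \<union> b\<close> with \<open>a, b \<in> P\<close>; boxes preserve finite meets and send such a clause to the
  implication \<open>a \<Rrightarrow> b\<close> (resp. \<open>a \<Rightarrow> b\<close>), so the generated algebra is closed under both boxes.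
  It is compact because a family with the finite intersection property extends to an ultra
  family, and compactness for \<open>P\<close> and its complements provides a point realising the ultra
  family on the generators, hence on the whole algebra.

  (2) The admissible sets of the quotient are the images of the \<open>R\<^sub>i\<close>-upsets in \<open>Q\<close>, and the
  two implications of the quotient become the boxes \<open>[i]((Y - U) \<union> V)\<close> and
  \<open>[i][m]((Y - U) \<union> V)\<close>. The substantial point is refinedness for \<open>R\<^sub>m\<^sup>*\<close>: if no
  \<open>R\<^sub>m\<^sup>*\<close>-successor of \<open>x\<close> is equivalent to \<open>y\<close>, two compactness arguments with down-directed
  families of admissible sets produce \<open>a, b\<close> with \<open>y \<in> [i]a - [i]b\<close> and
  \<open>x \<in> [i][m]((Y - [i]a) \<union> [i]b)\<close>.
\<close>

lemma fip_mono: "fip X F \<Longrightarrow> G \<subseteq> F \<Longrightarrow> fip X G"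
  unfolding fip_def by blast

lemma not_fip_insertE:
  assumes "\<not> fip X (insert a M)"
  obtains G where "finite G" "G \<subseteq> M" "X \<inter> a \<inter> \<Inter>G = {}"
proof -
  obtain G' where G': "finite G'" "G' \<subseteq> insert a M" "X \<inter> \<Inter>G' = {}"
    using assms unfolding fip_def by blast
  show thesis
  proof (rule that)
    show "finite (G' - {a})" "G' - {a} \<subseteq> M" using G' by auto
    show "X \<inter> a \<inter> \<Inter>(G' - {a}) = {}" using G'(3) by blast
  qed
qed

lemma box_Int: "box X R (a \<inter> b) = box X R a \<inter> box X R b"
  unfolding box_def by blast

lemma box_mono: "a \<subseteq> b \<Longrightarrow> box X R a \<subseteq> box X R b"
  unfolding box_def by blast

lemma box_tight_iff:
  assumes "\<And>y. y \<in> X \<Longrightarrow> \<not> R x y \<Longrightarrow> \<exists>c\<in>B. x \<in> box X R c \<and> y \<notin> c" and "y \<in> X"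
  shows "R x y \<longleftrightarrow> (\<forall>c\<in>B. x \<in> box X R c \<longrightarrow> y \<in> c)"
  using assms unfolding box_def by blast

lemma imp_le_eq_imp_sq: "imp_le = imp_sq"
  by (simp add: fun_eq_iff imp_le_def imp_sq_def)

lemma sigma_hat_subset:
  assumes "P \<subseteq> Pow X" and "a \<in> sigma_hat X P"
  shows "a \<subseteq> X"
  using assms(2) by induction (use assms(1) in auto)

lemma sigma_hat_finite_Inter:
  "finite F \<Longrightarrow> (\<And>p. p \<in> F \<Longrightarrow> f p \<in> sigma_hat X P) \<Longrightarrow> X \<inter> (\<Inter>p\<in>F. f p) \<in> sigma_hat X P"
proof (induction F rule: finite_induct)
  case empty
  then show ?case by (simp add: sigma_hat.top)
next
  case (insert p F)
  have "X \<inter> (\<Inter>q\<in>insert p F. f q) = f p \<inter> (X \<inter> (\<Inter>q\<in>F. f q))" by auto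
  then show ?case using insert by (simp add: sigma_hat.inter)
qed

subsection \<open>Conjunctive normal form in the generated Boolean algebra\<close>

definition cnf :: "'a set \<Rightarrow> ('a set \<times> 'a set) set \<Rightarrow> 'a set" where
  "cnf X F = X \<inter> (\<Inter>(a, b)\<in>F. (X - a) \<union> b)"

lemma box_cnf:
  assumes "\<And>x y. R x y \<Longrightarrow> y \<in> X"
  shows "box X R (cnf X F) = X \<inter> (\<Inter>(a, b)\<in>F. imp_sq X R a b)"
  using assms by (auto simp: box_def cnf_def imp_sq_def)

locale set_lattice =
  fixes X :: "'a set" and P :: "'a set set"
  assumes subset_Pow: "P \<subseteq> Pow X" and top_in: "X \<in> P" and bot_in: "{} \<in> P"
    and Int_in: "a \<in> P \<Longrightarrow> b \<in> P \<Longrightarrow> a \<inter> b \<in> P"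
    and Un_in: "a \<in> P \<Longrightarrow> b \<in> P \<Longrightarrow> a \<union> b \<in> P"
begin

definition cnfs :: "'a set set" where
  "cnfs = {cnf X F | F. finite F \<and> F \<subseteq> P \<times> P}"

lemma cnfsI: "finite F \<Longrightarrow> F \<subseteq> P \<times> P \<Longrightarrow> cnf X F \<in> cnfs"
  unfolding cnfs_def by blast

lemma cnfsE:
  assumes "c \<in> cnfs"
  obtains F where "finite F" "F \<subseteq> P \<times> P" "c = cnf X F"
  using assms unfolding cnfs_def by blast

lemma gen_in_cnfs: "a \<in> P \<Longrightarrow> a \<in> cnfs"
proof -
  assume a: "a \<in> P"
  have "a = cnf X {(X, a)}" using a subset_Pow by (auto simp: cnf_def)
  then show "a \<in> cnfs" using a top_in cnfsI[of "{(X, a)}"] by simp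
qed

lemma top_in_cnfs: "X \<in> cnfs"
  using cnfsI[of "{}"] by (simp add: cnf_def)

lemma Int_in_cnfs: "c \<in> cnfs \<Longrightarrow> d \<in> cnfs \<Longrightarrow> c \<inter> d \<in> cnfs"
proof (elim cnfsE)
  fix F G assume "finite F" "F \<subseteq> P \<times> P" "c = cnf X F" "finite G" "G \<subseteq> P \<times> P" "d = cnf X G"
  moreover have "cnf X F \<inter> cnf X G = cnf X (F \<union> G)" by (auto simp: cnf_def)
  ultimately show "c \<inter> d \<in> cnfs" by (auto intro: cnfsI)
qed

lemma cnf_Un:
  "cnf X F \<union> cnf X G = cnf X ((\<lambda>((a, b), (a', b')). (a \<inter> a', b \<union> b')) ` (F \<times> G))"
  unfolding cnf_def by fastforce

lemma Un_in_cnfs: "c \<in> cnfs \<Longrightarrow> d \<in> cnfs \<Longrightarrow> c \<union> d \<in> cnfs"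
proof (elim cnfsE)
  fix F G assume "finite F" "F \<subseteq> P \<times> P" "c = cnf X F" "finite G" "G \<subseteq> P \<times> P" "d = cnf X G"
  then show "c \<union> d \<in> cnfs"
    using Int_in Un_in by (simp add: cnf_Un, intro cnfsI) (auto simp: subset_iff)
qed

lemma Diff_cnf_in_cnfs: "finite F \<Longrightarrow> F \<subseteq> P \<times> P \<Longrightarrow> X - cnf X F \<in> cnfs"
proof (induction F rule: finite_induct)
  case empty
  have "X - cnf X {} = cnf X {(X, {})}" by (auto simp: cnf_def)
  then show ?case using top_in bot_in by (auto intro: cnfsI)
next
  case (insert p F)
  obtain a b where p: "p = (a, b)" by fastforce
  have "X - cnf X (insert p F) = cnf X {(X, a), (b, {})} \<union> (X - cnf X F)"
    using insert.prems subset_Pow unfolding p by (auto simp: cnf_def)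
  moreover have "cnf X {(X, a), (b, {})} \<in> cnfs"
    using insert.prems top_in bot_in unfolding p by (intro cnfsI) auto
  ultimately show ?case using insert by (simp add: Un_in_cnfs)
qed

lemma Diff_in_cnfs: "c \<in> cnfs \<Longrightarrow> X - c \<in> cnfs"
  by (elim cnfsE) (simp add: Diff_cnf_in_cnfs)

lemma sigma_hat_subset_cnfs: "sigma_hat X P \<subseteq> cnfs"
proof
  fix a assume "a \<in> sigma_hat X P"
  then show "a \<in> cnfs"
    by (induction rule: sigma_hat.induct)
       (auto intro: gen_in_cnfs top_in_cnfs Diff_in_cnfs Int_in_cnfs Un_in_cnfs)
qed

lemma box_in_sigma_hat:
  assumes R: "\<And>x y. R x y \<Longrightarrow> y \<in> X"
    and imp: "\<And>a b. a \<in> P \<Longrightarrow> b \<in> P \<Longrightarrow> imp_sq X R a b \<in> P"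
    and c: "c \<in> sigma_hat X P"
  shows "box X R c \<in> sigma_hat X P"
proof -
  obtain F where F: "finite F" "F \<subseteq> P \<times> P" "c = cnf X F"
    using c sigma_hat_subset_cnfs by (blast elim: cnfsE)
  have "imp_sq X R a b \<in> sigma_hat X P" if "(a, b) \<in> F" for a b
    using that F(2) imp by (blast intro: sigma_hat.gen)
  then have "X \<inter> (\<Inter>(a, b)\<in>F. imp_sq X R a b) \<in> sigma_hat X P"
    using F(1) by (intro sigma_hat_finite_Inter) auto
  then show ?thesis using box_cnf[OF R] F(3) by simp
qed

end

subsection \<open>Compactness of the generated Boolean algebra\<close>

definition ultra_family :: "'a set \<Rightarrow> 'a set set \<Rightarrow> 'a set set \<Rightarrow> bool" where
  "ultra_family X B M \<longleftrightarrow> M \<subseteq> B \<and> fip X M \<and> (\<forall>a\<in>B. a \<in> M \<or> X - a \<in> M)"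

lemma maximal_fip_extension:
  assumes F: "F \<subseteq> B" "fip X F"
  obtains M where "F \<subseteq> M" "M \<subseteq> B" "fip X M"
    "\<And>N. M \<subseteq> N \<Longrightarrow> N \<subseteq> B \<Longrightarrow> fip X N \<Longrightarrow> N = M"
proof -
  define \<A> where "\<A> = {M. F \<subseteq> M \<and> M \<subseteq> B \<and> fip X M}"
  have "\<exists>M\<in>\<A>. \<forall>N\<in>\<A>. M \<subseteq> N \<longrightarrow> N = M"
  proof (rule subset_Zorn_nonempty)
    show "\<A> \<noteq> {}" using F unfolding \<A>_def by blast
  next
    fix \<C> assume \<C>: "\<C> \<noteq> {}" "subset.chain \<A> \<C>"
    then have \<C>_sub: "\<C> \<subseteq> \<A>" by (simp add: subset_chain_def)
    have "fip X (\<Union>\<C>)" unfolding fip_def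
    proof (intro allI impI)
      fix G assume G: "G \<subseteq> \<Union>\<C> \<and> finite G"
      then obtain N where "N \<in> \<C>" "G \<subseteq> N"
        using finite_subset_Union_chain[OF _ _ \<C>] by blast
      moreover have "fip X N" using \<open>N \<in> \<C>\<close> \<C>_sub unfolding \<A>_def by blast
      ultimately show "X \<inter> \<Inter>G \<noteq> {}" using G unfolding fip_def by blast
    qed
    moreover have "F \<subseteq> \<Union>\<C>" "\<Union>\<C> \<subseteq> B" using \<C> \<C>_sub unfolding \<A>_def by blast+
    ultimately show "\<Union>\<C> \<in> \<A>" unfolding \<A>_def by blast
  qed
  then obtain M where "M \<in> \<A>" and maximal: "\<forall>N\<in>\<A>. M \<subseteq> N \<longrightarrow> N = M" by blast
  then have M: "F \<subseteq> M" "M \<subseteq> B" "fip X M" unfolding \<A>_def by auto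
  moreover have "N = M" if "M \<subseteq> N" "N \<subseteq> B" "fip X N" for N
    using maximal that M(1) unfolding \<A>_def by blast
  ultimately show thesis using that by blast
qed

lemma ultra_family_extend:
  assumes F: "F \<subseteq> B" "fip X F" and compl: "\<And>a. a \<in> B \<Longrightarrow> X - a \<in> B"
  obtains M where "F \<subseteq> M" "ultra_family X B M"
proof -
  obtain M where M: "F \<subseteq> M" "M \<subseteq> B" "fip X M"
    and max: "\<And>N. M \<subseteq> N \<Longrightarrow> N \<subseteq> B \<Longrightarrow> fip X N \<Longrightarrow> N = M"
    using maximal_fip_extension[OF F] by blast
  have "\<not> fip X (insert c M)" if "c \<in> B" "c \<notin> M" for c
  proof
    assume "fip X (insert c M)"
    then have "insert c M = M" by (rule max[rotated 2]) (use M that in auto)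
    with \<open>c \<notin> M\<close> show False by blast
  qed
  note not_fip = this[THEN not_fip_insertE]
  have decide: "a \<in> M \<or> X - a \<in> M" if a: "a \<in> B" for a
  proof (rule ccontr)
    assume neither: "\<not> (a \<in> M \<or> X - a \<in> M)"
    obtain G1 where G1: "finite G1" "G1 \<subseteq> M" "X \<inter> a \<inter> \<Inter>G1 = {}"
      using not_fip[of a] a neither by blast
    obtain G2 where G2: "finite G2" "G2 \<subseteq> M" "X \<inter> (X - a) \<inter> \<Inter>G2 = {}"
      using not_fip[of "X - a"] compl[OF a] neither by blast
    have "X \<inter> \<Inter>(G1 \<union> G2) = {}" using G1(3) G2(3) by blast
    moreover have "finite (G1 \<union> G2)" "G1 \<union> G2 \<subseteq> M" using G1 G2 by auto
    ultimately show False using M(3) unfolding fip_def by blast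
  qed
  have "ultra_family X B M" unfolding ultra_family_def using M(2,3) decide by blast
  with M(1) show thesis by (rule that)
qed

context
  fixes X :: "'a set" and B M :: "'a set set"
  assumes M: "ultra_family X B M"
begin

lemma ultra_family_meet: "finite G \<Longrightarrow> G \<subseteq> M \<Longrightarrow> X \<inter> \<Inter>G \<noteq> {}"
  using M unfolding ultra_family_def fip_def by blast

lemma ultra_family_meet2: "a \<in> M \<Longrightarrow> b \<in> M \<Longrightarrow> X \<inter> a \<inter> b \<noteq> {}"
  using ultra_family_meet[of "{a, b}"] by (simp add: Int_assoc)

lemma ultra_family_meet3: "a \<in> M \<Longrightarrow> b \<in> M \<Longrightarrow> c \<in> M \<Longrightarrow> X \<inter> a \<inter> b \<inter> c \<noteq> {}"
  using ultra_family_meet[of "{a, b, c}"] by (simp add: Int_assoc)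

lemma ultra_family_decide: "a \<in> B \<Longrightarrow> a \<in> M \<or> X - a \<in> M"
  using M unfolding ultra_family_def by blast

lemma ultra_family_Diff_iff: "a \<in> B \<Longrightarrow> X - a \<in> M \<longleftrightarrow> a \<notin> M"
  using ultra_family_decide[of a] ultra_family_meet2[of a "X - a"] by blast

lemma ultra_family_top: "X \<in> B \<Longrightarrow> X \<in> M"
  using ultra_family_decide[of X] ultra_family_meet2[of "{}" "{}"] by auto

lemma ultra_family_Int_iff:
  assumes "a \<in> B" "b \<in> B" "a \<inter> b \<in> B"
  shows "a \<inter> b \<in> M \<longleftrightarrow> a \<in> M \<and> b \<in> M"
  using ultra_family_Diff_iff[OF assms(1)] ultra_family_Diff_iff[OF assms(2)]
    ultra_family_Diff_iff[OF assms(3)] ultra_family_meet2[of "a \<inter> b" "X - a"]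
    ultra_family_meet2[of "a \<inter> b" "X - b"] ultra_family_meet3[of a b "X - (a \<inter> b)"]
  by blast

lemma ultra_family_Un_iff:
  assumes "a \<in> B" "b \<in> B" "a \<union> b \<in> B"
  shows "a \<union> b \<in> M \<longleftrightarrow> a \<in> M \<or> b \<in> M"
  using ultra_family_Diff_iff[OF assms(1)] ultra_family_Diff_iff[OF assms(2)]
    ultra_family_Diff_iff[OF assms(3)] ultra_family_meet3[of "a \<union> b" "X - a" "X - b"]
    ultra_family_meet2[of a "X - (a \<union> b)"] ultra_family_meet2[of b "X - (a \<union> b)"]
  by blast
end

lemma ultra_family_sigma_hat_point:
  assumes M: "ultra_family X (sigma_hat X P) M" and x: "x \<in> X"
    and gen: "\<And>a. a \<in> P \<Longrightarrow> a \<in> M \<longleftrightarrow> x \<in> a"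
    and a: "a \<in> sigma_hat X P"
  shows "a \<in> M \<longleftrightarrow> x \<in> a"
  using a
proof induction
  case (gen a)
  then show ?case using assms(3) by blast
next
  case top
  show ?case using ultra_family_top[OF M] x by (simp add: sigma_hat.top)
next
  case (compl a)
  then show ?case using ultra_family_Diff_iff[OF M] x by blast
next
  case (inter a b)
  then show ?case using ultra_family_Int_iff[OF M] by (simp add: sigma_hat.inter)
next
  case (union a b)
  then show ?case using ultra_family_Un_iff[OF M] by (simp add: sigma_hat.union)
qed

lemma sigma_hat_compact:
  assumes compact: "\<And>F. F \<subseteq> P \<union> {X - a | a. a \<in> P} \<Longrightarrow> fip X F \<Longrightarrow> X \<inter> \<Inter>F \<noteq> {}"
    and F: "F \<subseteq> sigma_hat X P" "fip X F"
  shows "X \<inter> \<Inter>F \<noteq> {}"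
proof -
  obtain M where "F \<subseteq> M" and M: "ultra_family X (sigma_hat X P) M"
    using ultra_family_extend[OF F sigma_hat.compl] by blast
  let ?L = "M \<inter> (P \<union> {X - a | a. a \<in> P})"
  have "fip X ?L" using M fip_mono[of X M ?L] unfolding ultra_family_def by blast
  then obtain x where x: "x \<in> X" "x \<in> \<Inter>?L" using compact[OF Int_lower2] by blast
  have "a \<in> M \<longleftrightarrow> x \<in> a" if a: "a \<in> P" for a
  proof
    assume "a \<in> M"
    then show "x \<in> a" using a x(2) by blast
  next
    assume "x \<in> a"
    show "a \<in> M"
    proof (rule ccontr)
      assume "a \<notin> M"
      then have "X - a \<in> ?L" using ultra_family_Diff_iff[OF M sigma_hat.gen[OF a]] a by blast
      then show False using x(2) \<open>x \<in> a\<close> by blast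
    qed
  qed
  then have "a \<in> M \<longleftrightarrow> x \<in> a" if "a \<in> sigma_hat X P" for a
    using ultra_family_sigma_hat_point[OF M x(1) _ that] by blast
  then have "x \<in> X \<inter> \<Inter>F" using x(1) \<open>F \<subseteq> M\<close> F(1) by blast
  then show ?thesis by blast
qed

subsection \<open>From descriptive multimap-frames to descriptive S4K-frames\<close>

locale mframe =
  fixes X :: "'a set" and le sq :: "'a \<Rightarrow> 'a \<Rightarrow> bool" and P :: "'a set set"
  assumes general: "general_mframe X le sq P"
begin

lemma le_dom: "le x y \<Longrightarrow> x \<in> X \<and> y \<in> X"
  using general unfolding general_mframe_def by blast

lemma sq_dom: "sq x y \<Longrightarrow> x \<in> X \<and> y \<in> X"
  using general unfolding general_mframe_def by blast

lemma le_refl: "x \<in> X \<Longrightarrow> le x x"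
  using general unfolding general_mframe_def by blast

lemma le_trans: "le x y \<Longrightarrow> le y z \<Longrightarrow> le x z"
  using general unfolding general_mframe_def by blast

lemma le_antisym: "le x y \<Longrightarrow> le y x \<Longrightarrow> x = y"
  using general unfolding general_mframe_def by blast

lemma upset_P: "a \<in> P \<Longrightarrow> upset X le a"
  using general unfolding general_mframe_def by blast

lemma imp_le_in_P: "a \<in> P \<Longrightarrow> b \<in> P \<Longrightarrow> imp_le X le a b \<in> P"
  using general unfolding general_mframe_def by blast

lemma imp_sq_in_P: "a \<in> P \<Longrightarrow> b \<in> P \<Longrightarrow> imp_sq X sq a b \<in> P"
  using general unfolding general_mframe_def by blast

sublocale set_lattice X P
proof
  show "P \<subseteq> Pow X" using upset_P unfolding upset_def by blast
  show "X \<in> P" "{} \<in> P" using general unfolding general_mframe_def by blast+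
  show "a \<inter> b \<in> P" "a \<union> b \<in> P" if "a \<in> P" "b \<in> P" for a b
    using general that unfolding general_mframe_def by blast+
qed

lemma general_S4K_sigma_hat: "general_S4K X le sq (sigma_hat X P)"
  unfolding general_S4K_def
proof (intro conjI ballI allI impI)
  show "sigma_hat X P \<subseteq> Pow X" using sigma_hat_subset[OF subset_Pow] by blast
  show "{} \<in> sigma_hat X P" using bot_in by (rule sigma_hat.gen)
  show "X \<in> sigma_hat X P" by (rule sigma_hat.top)
  fix c d assume c: "c \<in> sigma_hat X P"
  show "X - c \<in> sigma_hat X P" using c by (rule sigma_hat.compl)
  show "box X le c \<in> sigma_hat X P"
    using c le_dom imp_le_in_P by (intro box_in_sigma_hat) (auto simp: imp_le_eq_imp_sq)
  show "box X sq c \<in> sigma_hat X P"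
    using c sq_dom imp_sq_in_P by (intro box_in_sigma_hat) auto
  assume d: "d \<in> sigma_hat X P"
  show "c \<inter> d \<in> sigma_hat X P" using c d by (rule sigma_hat.inter)
  show "c \<union> d \<in> sigma_hat X P" using c d by (rule sigma_hat.union)
qed (use le_dom sq_dom le_refl le_trans in blast)+

end

locale descriptive_mframe_frame = mframe +
  assumes descriptive: "descriptive_mframe X le sq P"
begin

lemma compact_literals:
  "F \<subseteq> P \<union> {X - a | a. a \<in> P} \<Longrightarrow> fip X F \<Longrightarrow> X \<inter> \<Inter>F \<noteq> {}"
  using descriptive unfolding descriptive_mframe_def by auto

lemma le_refined: "x \<in> X \<Longrightarrow> y \<in> X \<Longrightarrow> \<not> le x y \<Longrightarrow> \<exists>a\<in>P. x \<in> a \<and> y \<notin> a"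
  using descriptive unfolding descriptive_mframe_def by auto

lemma sq_refined:
  "x \<in> X \<Longrightarrow> y \<in> X \<Longrightarrow> \<not> sq x y \<Longrightarrow> \<exists>a\<in>P. \<exists>b\<in>P. x \<in> imp_sq X sq a b \<and> y \<in> a \<and> y \<notin> b"
  using descriptive unfolding descriptive_mframe_def by auto

lemma sigma_hat_differentiated:
  assumes "x \<in> X" "y \<in> X" "x \<noteq> y"
  shows "\<exists>a\<in>sigma_hat X P. x \<in> a \<and> y \<notin> a"
proof -
  have "\<not> le x y \<or> \<not> le y x" using le_antisym assms(3) by blast
  then show ?thesis
  proof
    assume "\<not> le x y"
    then obtain a where "a \<in> P" "x \<in> a" "y \<notin> a" using le_refined assms(1,2) by blast
    then show ?thesis using sigma_hat.gen by blast
  next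
    assume "\<not> le y x"
    then obtain a where "a \<in> P" "y \<in> a" "x \<notin> a" using le_refined assms(1,2) by blast
    then show ?thesis using sigma_hat.compl[OF sigma_hat.gen] assms(1) by blast
  qed
qed

lemma sigma_hat_le_tight:
  assumes x: "x \<in> X" and "y \<in> X"
  shows "le x y \<longleftrightarrow> (\<forall>c\<in>sigma_hat X P. x \<in> box X le c \<longrightarrow> y \<in> c)"
proof (rule box_tight_iff[OF _ \<open>y \<in> X\<close>])
  fix y assume "y \<in> X" "\<not> le x y"
  then obtain a where a: "a \<in> P" "x \<in> a" "y \<notin> a" using le_refined x by blast
  moreover have "x \<in> box X le a"
    using upset_P[OF a(1)] a(2) unfolding upset_def box_def by blast
  ultimately show "\<exists>c\<in>sigma_hat X P. x \<in> box X le c \<and> y \<notin> c" using sigma_hat.gen by blast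
qed

lemma sigma_hat_sq_tight:
  assumes x: "x \<in> X" and "y \<in> X"
  shows "sq x y \<longleftrightarrow> (\<forall>c\<in>sigma_hat X P. x \<in> box X sq c \<longrightarrow> y \<in> c)"
proof (rule box_tight_iff[OF _ \<open>y \<in> X\<close>])
  fix y assume "y \<in> X" "\<not> sq x y"
  then obtain a b where ab: "a \<in> P" "b \<in> P" "x \<in> imp_sq X sq a b" "y \<in> a" "y \<notin> b"
    using sq_refined x by blast
  have "x \<in> box X sq ((X - a) \<union> b)"
    using sq_dom ab(3) unfolding imp_sq_def box_def by blast
  moreover have "(X - a) \<union> b \<in> sigma_hat X P"
    using ab(1,2) by (intro sigma_hat.union sigma_hat.compl sigma_hat.gen)
  ultimately show "\<exists>c\<in>sigma_hat X P. x \<in> box X sq c \<and> y \<notin> c" using ab(4,5) by blast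
qed

lemma descriptive_S4K_sigma_hat: "descriptive_S4K X le sq (sigma_hat X P)"
  unfolding descriptive_S4K_def
proof (intro conjI ballI allI impI)
  show "X \<inter> \<Inter>F \<noteq> {}" if "F \<subseteq> sigma_hat X P \<and> fip X F" for F
    using that by (intro sigma_hat_compact[OF compact_literals]) auto
qed (use general_S4K_sigma_hat sigma_hat_differentiated sigma_hat_le_tight sigma_hat_sq_tight in auto)

end

subsection \<open>Down-directed families\<close>

definition down_directed :: "'a set \<Rightarrow> 'a set set \<Rightarrow> bool" where
  "down_directed X F \<longleftrightarrow> F \<noteq> {} \<and> (\<forall>a\<in>F. \<forall>b\<in>F. \<exists>c\<in>F. X \<inter> c \<subseteq> a \<inter> b)"

lemma down_directed_finite_Inter:
  assumes F: "down_directed X F" and "finite G" "G \<subseteq> F"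
  shows "\<exists>c\<in>F. X \<inter> c \<subseteq> \<Inter>G"
  using assms(2,3)
proof (induction G rule: finite_induct)
  case empty
  then show ?case using F unfolding down_directed_def by blast
next
  case (insert a G)
  then obtain c where c: "c \<in> F" "X \<inter> c \<subseteq> \<Inter>G" by blast
  obtain d where d: "d \<in> F" "X \<inter> d \<subseteq> a \<inter> c"
    using F insert.prems c(1) unfolding down_directed_def by blast
  then have "X \<inter> d \<subseteq> \<Inter>(insert a G)" using c(2) by auto
  with d(1) show ?case by blast
qed

lemma fip_Un_down_directed:
  assumes F: "down_directed X F" and G: "down_directed X G"
    and meet: "\<And>a b. a \<in> F \<Longrightarrow> b \<in> G \<Longrightarrow> X \<inter> a \<inter> b \<noteq> {}"
  shows "fip X (F \<union> G)"
  unfolding fip_def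
proof (intro allI impI)
  fix H assume H: "H \<subseteq> F \<union> G \<and> finite H"
  obtain a where "a \<in> F" "X \<inter> a \<subseteq> \<Inter>(H \<inter> F)"
    using down_directed_finite_Inter[OF F, of "H \<inter> F"] H by blast
  moreover obtain b where "b \<in> G" "X \<inter> b \<subseteq> \<Inter>(H \<inter> G)"
    using down_directed_finite_Inter[OF G, of "H \<inter> G"] H by blast
  ultimately have "X \<inter> a \<inter> b \<subseteq> X \<inter> \<Inter>H" using H by blast
  then show "X \<inter> \<Inter>H \<noteq> {}" using meet \<open>a \<in> F\<close> \<open>b \<in> G\<close> by blast
qed

lemma down_directed_box:
  assumes "X \<in> Q" "\<And>a b. a \<in> Q \<Longrightarrow> b \<in> Q \<Longrightarrow> a \<inter> b \<in> Q"
    and "w \<in> X" "\<And>y. R w y \<Longrightarrow> y \<in> X"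
  shows "down_directed X {a \<in> Q. w \<in> box X R a}"
  unfolding down_directed_def
proof (intro conjI ballI)
  show "{a \<in> Q. w \<in> box X R a} \<noteq> {}" using assms(1,3,4) unfolding box_def by blast
  fix a b assume "a \<in> {a \<in> Q. w \<in> box X R a}" "b \<in> {a \<in> Q. w \<in> box X R a}"
  then have "a \<inter> b \<in> {a \<in> Q. w \<in> box X R a}" using assms(2) by (simp add: box_Int)
  then show "\<exists>c\<in>{a \<in> Q. w \<in> box X R a}. X \<inter> c \<subseteq> a \<inter> b" by blast
qed

lemma fip_vimage:
  assumes "fip (f ` Y) F"
  shows "fip Y ((\<lambda>A. Y \<inter> f -` A) ` F)"
  unfolding fip_def
proof (intro allI impI)
  fix G' assume "G' \<subseteq> (\<lambda>A. Y \<inter> f -` A) ` F \<and> finite G'"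
  then obtain G where G: "G \<subseteq> F" "finite G" "G' = (\<lambda>A. Y \<inter> f -` A) ` G"
    by (meson finite_subset_image)
  then obtain y where "y \<in> Y" "f y \<in> \<Inter>G" using assms unfolding fip_def by blast
  then have "y \<in> Y \<inter> \<Inter>G'" using G(3) by blast
  then show "Y \<inter> \<Inter>G' \<noteq> {}" by blast
qed

subsection \<open>The quotient of a general S4K-frame\<close>

locale S4K_frame =
  fixes Y :: "'b set" and Ri Rm :: "'b \<Rightarrow> 'b \<Rightarrow> bool" and Q :: "'b set set"
  assumes general: "general_S4K Y Ri Rm Q"
begin

lemma Ri_dom: "Ri x y \<Longrightarrow> x \<in> Y \<and> y \<in> Y"
  using general unfolding general_S4K_def by (elim conjE) blast

lemma Rm_dom: "Rm x y \<Longrightarrow> x \<in> Y \<and> y \<in> Y"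
  using general unfolding general_S4K_def by (elim conjE) blast

lemma Ri_refl: "x \<in> Y \<Longrightarrow> Ri x x"
  using general unfolding general_S4K_def by (elim conjE) blast

lemma Ri_trans: "Ri x y \<Longrightarrow> Ri y z \<Longrightarrow> Ri x z"
  using general unfolding general_S4K_def by (elim conjE) blast

lemma empty_in_Q: "{} \<in> Q"
  using general unfolding general_S4K_def by (elim conjE) blast

lemma top_in_Q: "Y \<in> Q"
  using general unfolding general_S4K_def by (elim conjE) blast

lemma Diff_in_Q: "a \<in> Q \<Longrightarrow> Y - a \<in> Q"
  using general unfolding general_S4K_def by (elim conjE) blast

lemma box_Ri_in_Q: "a \<in> Q \<Longrightarrow> box Y Ri a \<in> Q"
  using general unfolding general_S4K_def by (elim conjE) blast

lemma box_Rm_in_Q: "a \<in> Q \<Longrightarrow> box Y Rm a \<in> Q"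
  using general unfolding general_S4K_def by (elim conjE) blast

lemma Int_in_Q: "a \<in> Q \<Longrightarrow> b \<in> Q \<Longrightarrow> a \<inter> b \<in> Q"
  using general unfolding general_S4K_def by (elim conjE) blast

lemma Un_in_Q: "a \<in> Q \<Longrightarrow> b \<in> Q \<Longrightarrow> a \<union> b \<in> Q"
  using general unfolding general_S4K_def by (elim conjE) blast

lemma Diff_box_Ri_in_Q: "a \<in> Q \<Longrightarrow> b \<in> Q \<Longrightarrow> box Y Ri a - box Y Ri b \<in> Q"
proof -
  have "box Y Ri a - box Y Ri b = box Y Ri a \<inter> (Y - box Y Ri b)" unfolding box_def by blast
  then show "a \<in> Q \<Longrightarrow> b \<in> Q \<Longrightarrow> box Y Ri a - box Y Ri b \<in> Q"
    by (simp add: Int_in_Q Diff_in_Q box_Ri_in_Q)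
qed

lemma box_Ri_subset: "box Y Ri a \<subseteq> a"
  unfolding box_def using Ri_refl by blast

lemma upset_box_Ri: "upset Y Ri (box Y Ri a)"
  unfolding upset_def box_def using Ri_trans Ri_dom by blast

lemma box_Ri_upset: "upset Y Ri U \<Longrightarrow> box Y Ri U = U"
  unfolding upset_def box_def using Ri_refl by blast

lemma box_Ri_Un_box: "box Y Ri (box Y Ri a \<union> box Y Ri b) = box Y Ri a \<union> box Y Ri b"
  by (rule box_Ri_upset) (use upset_box_Ri[of a] upset_box_Ri[of b] in \<open>auto simp: upset_def\<close>)

abbreviation cls :: "'b \<Rightarrow> 'b set" where
  "cls \<equiv> equiv_cls Y Ri"

lemma classes_eq: "classes Y Ri = cls ` Y"
  unfolding classes_def ..

lemma cls_eq_iff: "x \<in> Y \<Longrightarrow> y \<in> Y \<Longrightarrow> cls x = cls y \<longleftrightarrow> Ri x y \<and> Ri y x"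
  unfolding equiv_cls_def using Ri_refl Ri_trans by blast

lemma cls_in_image_upset_iff: "upset Y Ri U \<Longrightarrow> x \<in> Y \<Longrightarrow> cls x \<in> cls ` U \<longleftrightarrow> x \<in> U"
  using cls_eq_iff unfolding upset_def by blast

lemma image_cls_eqI:
  assumes "A \<subseteq> classes Y Ri" "B \<subseteq> Y" "\<And>x. x \<in> Y \<Longrightarrow> cls x \<in> A \<longleftrightarrow> x \<in> B"
  shows "A = cls ` B"
  using assms unfolding classes_eq by blast

lemma rho_Ri_cls_iff: "x \<in> Y \<Longrightarrow> y \<in> Y \<Longrightarrow> rho_Ri Y Ri (cls x) (cls y) \<longleftrightarrow> Ri x y"
  unfolding rho_Ri_def using cls_eq_iff Ri_trans by metis

lemma rho_Rm_cls_iff: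
  assumes "x \<in> Y" "z \<in> Y"
  shows "rho_Rm Y Ri Rm (cls x) (cls z) \<longleftrightarrow> (\<exists>z'. Ri z' z \<and> Ri z z' \<and> Rm_star Ri Rm x z')"
proof
  assume "rho_Rm Y Ri Rm (cls x) (cls z)"
  then obtain x1 z1 z' where "x1 \<in> Y" "z1 \<in> Y" "cls x = cls x1" "cls z = cls z1"
    "Ri z' z1" "Ri z1 z'" "Rm_star Ri Rm x1 z'"
    unfolding rho_Rm_def by blast
  then show "\<exists>z'. Ri z' z \<and> Ri z z' \<and> Rm_star Ri Rm x z'"
    using assms cls_eq_iff Ri_trans unfolding Rm_star_def by meson
next
  assume "\<exists>z'. Ri z' z \<and> Ri z z' \<and> Rm_star Ri Rm x z'"
  then show "rho_Rm Y Ri Rm (cls x) (cls z)"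
    unfolding rho_Rm_def using assms Ri_dom by blast
qed

lemma rho_RiE:
  assumes "rho_Ri Y Ri c d"
  obtains x y where "x \<in> Y" "y \<in> Y" "c = cls x" "d = cls y" "Ri x y"
  using assms unfolding rho_Ri_def by blast

lemma rho_RmE:
  assumes "rho_Rm Y Ri Rm c d"
  obtains x z where "x \<in> Y" "z \<in> Y" "c = cls x" "d = cls z" "rho_Rm Y Ri Rm (cls x) (cls z)"
  using assms unfolding rho_Rm_def by blast

lemma rho_P_iff: "A \<in> rho_P Y Ri Q \<longleftrightarrow> (\<exists>U\<in>Q. upset Y Ri U \<and> A = cls ` U)"
proof
  assume "A \<in> rho_P Y Ri Q"
  then obtain b where "b \<in> Q" "A = cls ` box Y Ri b" unfolding rho_P_def by blast
  then show "\<exists>U\<in>Q. upset Y Ri U \<and> A = cls ` U"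
    using box_Ri_in_Q upset_box_Ri by blast
next
  assume "\<exists>U\<in>Q. upset Y Ri U \<and> A = cls ` U"
  then obtain U where "U \<in> Q" "upset Y Ri U" "A = cls ` U" by blast
  then have "A = cls ` box Y Ri U" by (simp add: box_Ri_upset)
  with \<open>U \<in> Q\<close> show "A \<in> rho_P Y Ri Q" unfolding rho_P_def by blast
qed

lemma upset_image_cls:
  assumes U: "upset Y Ri U"
  shows "upset (classes Y Ri) (rho_Ri Y Ri) (cls ` U)"
  unfolding upset_def
proof (intro conjI allI impI)
  show "cls ` U \<subseteq> classes Y Ri" using U unfolding upset_def classes_eq by blast
  fix c d assume "c \<in> cls ` U \<and> rho_Ri Y Ri c d"
  then obtain x y where "x \<in> Y" "cls x \<in> cls ` U" "d = cls y" "Ri x y" by (blast elim: rho_RiE)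
  then have "y \<in> U" using U cls_in_image_upset_iff[OF U] unfolding upset_def by blast
  then show "d \<in> cls ` U" using \<open>d = cls y\<close> by blast
qed

lemma imp_le_image_cls:
  assumes U: "upset Y Ri U" and V: "upset Y Ri V"
  shows "imp_le (classes Y Ri) (rho_Ri Y Ri) (cls ` U) (cls ` V) = cls ` box Y Ri ((Y - U) \<union> V)"
proof (rule image_cls_eqI)
  show "imp_le (classes Y Ri) (rho_Ri Y Ri) (cls ` U) (cls ` V) \<subseteq> classes Y Ri"
    unfolding imp_le_def by blast
  show "box Y Ri ((Y - U) \<union> V) \<subseteq> Y" unfolding box_def by blast
  fix x assume x: "x \<in> Y"
  have UY: "u \<in> Y" if "u \<in> U" for u using U that unfolding upset_def by blast
  have "cls x \<in> imp_le (classes Y Ri) (rho_Ri Y Ri) (cls ` U) (cls ` V) \<longleftrightarrow>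
      (\<forall>u\<in>U. rho_Ri Y Ri (cls x) (cls u) \<longrightarrow> cls u \<in> cls ` V)"
    using x unfolding imp_le_def classes_eq by blast
  also have "\<dots> \<longleftrightarrow> (\<forall>u\<in>U. Ri x u \<longrightarrow> u \<in> V)"
    using x by (simp add: UY rho_Ri_cls_iff cls_in_image_upset_iff[OF V])
  also have "\<dots> \<longleftrightarrow> x \<in> box Y Ri ((Y - U) \<union> V)"
    using x Ri_dom unfolding box_def by blast
  finally show "cls x \<in> imp_le (classes Y Ri) (rho_Ri Y Ri) (cls ` U) (cls ` V) \<longleftrightarrow>
      x \<in> box Y Ri ((Y - U) \<union> V)" .
qed

lemma imp_sq_image_cls:
  assumes U: "upset Y Ri U" and V: "upset Y Ri V"
  shows "imp_sq (classes Y Ri) (rho_Rm Y Ri Rm) (cls ` U) (cls ` V) =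
    cls ` box Y Ri (box Y Rm ((Y - U) \<union> V))"
proof (rule image_cls_eqI)
  show "imp_sq (classes Y Ri) (rho_Rm Y Ri Rm) (cls ` U) (cls ` V) \<subseteq> classes Y Ri"
    unfolding imp_sq_def by blast
  show "box Y Ri (box Y Rm ((Y - U) \<union> V)) \<subseteq> Y" unfolding box_def by blast
  fix x assume x: "x \<in> Y"
  have UY: "u \<in> Y" if "u \<in> U" for u using U that unfolding upset_def by blast
  have "cls x \<in> imp_sq (classes Y Ri) (rho_Rm Y Ri Rm) (cls ` U) (cls ` V) \<longleftrightarrow>
      (\<forall>u\<in>U. rho_Rm Y Ri Rm (cls x) (cls u) \<longrightarrow> cls u \<in> cls ` V)"
    using x unfolding imp_sq_def classes_eq by blast
  also have "\<dots> \<longleftrightarrow> (\<forall>u\<in>U. (\<exists>u'. Ri u' u \<and> Ri u u' \<and> Rm_star Ri Rm x u') \<longrightarrow> u \<in> V)"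
    using x by (simp add: UY rho_Rm_cls_iff cls_in_image_upset_iff[OF V])
  also have "\<dots> \<longleftrightarrow> (\<forall>u. Rm_star Ri Rm x u \<and> u \<in> U \<longrightarrow> u \<in> V)"
    using U V Ri_refl Rm_dom unfolding upset_def Rm_star_def by meson
  also have "\<dots> \<longleftrightarrow> x \<in> box Y Ri (box Y Rm ((Y - U) \<union> V))"
    using x Ri_dom Rm_dom unfolding box_def Rm_star_def by blast
  finally show "cls x \<in> imp_sq (classes Y Ri) (rho_Rm Y Ri Rm) (cls ` U) (cls ` V) \<longleftrightarrow>
      x \<in> box Y Ri (box Y Rm ((Y - U) \<union> V))" .
qed

lemma image_cls_Int:
  assumes "upset Y Ri U" "upset Y Ri V"
  shows "cls ` U \<inter> cls ` V = cls ` (U \<inter> V)"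
proof -
  have "u \<in> V" if "u \<in> U" "cls u \<in> cls ` V" for u
    using that assms cls_in_image_upset_iff[of V u] unfolding upset_def by blast
  then show ?thesis by blast
qed

lemma rho_Ri_refl: "c \<in> classes Y Ri \<Longrightarrow> rho_Ri Y Ri c c"
  unfolding classes_eq using rho_Ri_cls_iff Ri_refl by auto

lemma rho_Ri_trans:
  assumes "rho_Ri Y Ri c d" "rho_Ri Y Ri d e"
  shows "rho_Ri Y Ri c e"
proof -
  obtain x y where xy: "x \<in> Y" "y \<in> Y" "c = cls x" "d = cls y" "Ri x y" using assms(1) by (rule rho_RiE)
  obtain y' z where yz: "y' \<in> Y" "z \<in> Y" "d = cls y'" "e = cls z" "Ri y' z" using assms(2) by (rule rho_RiE)
  have "Ri y y'" using cls_eq_iff xy(2,4) yz(1,3) by blast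
  then have "Ri x z" using xy(5) yz(5) Ri_trans by blast
  then show ?thesis using rho_Ri_cls_iff xy(1,3) yz(2,4) by blast
qed

lemma rho_Ri_antisym:
  assumes "rho_Ri Y Ri c d" "rho_Ri Y Ri d c"
  shows "c = d"
proof -
  obtain x y where xy: "x \<in> Y" "y \<in> Y" "c = cls x" "d = cls y" "Ri x y" using assms(1) by (rule rho_RiE)
  have "Ri y x" using assms(2) rho_Ri_cls_iff xy(1-4) by blast
  then show ?thesis using cls_eq_iff xy by blast
qed

lemma rho_Ri_rho_Rm:
  assumes "rho_Ri Y Ri c d" "rho_Rm Y Ri Rm d e"
  shows "rho_Rm Y Ri Rm c e"
proof -
  obtain x y where xy: "x \<in> Y" "y \<in> Y" "c = cls x" "d = cls y" "Ri x y" using assms(1) by (rule rho_RiE)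
  obtain y' z where "z \<in> Y" "d = cls y'" "e = cls z" and "rho_Rm Y Ri Rm (cls y') (cls z)"
    using assms(2) by (rule rho_RmE)
  then have "rho_Rm Y Ri Rm (cls y) (cls z)" using xy(4) by simp
  then obtain z' where "Ri z' z" "Ri z z'" "Rm_star Ri Rm y z'"
    using rho_Rm_cls_iff xy(2) \<open>z \<in> Y\<close> by blast
  then have "rho_Rm Y Ri Rm (cls x) (cls z)"
    using rho_Rm_cls_iff xy(1,5) \<open>z \<in> Y\<close> Ri_trans unfolding Rm_star_def by blast
  then show ?thesis using xy(3) \<open>e = cls z\<close> by simp
qed

lemma rho_P_closed:
  assumes "A \<in> rho_P Y Ri Q" "B \<in> rho_P Y Ri Q"
  shows "A \<inter> B \<in> rho_P Y Ri Q \<and> A \<union> B \<in> rho_P Y Ri Q \<and>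
    imp_le (classes Y Ri) (rho_Ri Y Ri) A B \<in> rho_P Y Ri Q \<and>
    imp_sq (classes Y Ri) (rho_Rm Y Ri Rm) A B \<in> rho_P Y Ri Q"
proof (intro conjI)
  obtain U V where UV: "U \<in> Q" "upset Y Ri U" "A = cls ` U" "V \<in> Q" "upset Y Ri V" "B = cls ` V"
    using assms unfolding rho_P_iff by blast
  have "upset Y Ri (U \<inter> V)" "upset Y Ri (U \<union> V)" using UV(2,5) unfolding upset_def by blast+
  then show "A \<inter> B \<in> rho_P Y Ri Q" "A \<union> B \<in> rho_P Y Ri Q"
    using UV Int_in_Q Un_in_Q image_cls_Int[OF UV(2,5)] unfolding rho_P_iff by (metis image_Un)+
  have "(Y - U) \<union> V \<in> Q" using UV Diff_in_Q Un_in_Q by blast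
  then show "imp_le (classes Y Ri) (rho_Ri Y Ri) A B \<in> rho_P Y Ri Q"
    "imp_sq (classes Y Ri) (rho_Rm Y Ri Rm) A B \<in> rho_P Y Ri Q"
    unfolding UV(3,6) imp_le_image_cls[OF UV(2,5)] imp_sq_image_cls[OF UV(2,5)] rho_P_iff
    using upset_box_Ri box_Ri_in_Q box_Rm_in_Q by blast+
qed

lemma general_mframe_rho:
  "general_mframe (classes Y Ri) (rho_Ri Y Ri) (rho_Rm Y Ri Rm) (rho_P Y Ri Q)"
  unfolding general_mframe_def
proof (intro conjI)
  show "\<forall>c d. rho_Ri Y Ri c d \<longrightarrow> c \<in> classes Y Ri \<and> d \<in> classes Y Ri"
    unfolding classes_eq by (blast elim: rho_RiE)
  show "\<forall>c d. rho_Rm Y Ri Rm c d \<longrightarrow> c \<in> classes Y Ri \<and> d \<in> classes Y Ri"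
    unfolding classes_eq by (blast elim: rho_RmE)
  show "\<forall>c\<in>classes Y Ri. rho_Ri Y Ri c c" using rho_Ri_refl by blast
  show "\<forall>c d e. rho_Ri Y Ri c d \<and> rho_Ri Y Ri d e \<longrightarrow> rho_Ri Y Ri c e" using rho_Ri_trans by blast
  show "\<forall>c d. rho_Ri Y Ri c d \<and> rho_Ri Y Ri d c \<longrightarrow> c = d" using rho_Ri_antisym by blast
  show "\<forall>c d e. rho_Ri Y Ri c d \<and> rho_Rm Y Ri Rm d e \<longrightarrow> rho_Rm Y Ri Rm c e"
    using rho_Ri_rho_Rm by blast
  show "\<forall>A\<in>rho_P Y Ri Q. upset (classes Y Ri) (rho_Ri Y Ri) A"
  proof
    fix A assume "A \<in> rho_P Y Ri Q"
    then obtain U where "upset Y Ri U" "A = cls ` U" unfolding rho_P_iff by blast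
    then show "upset (classes Y Ri) (rho_Ri Y Ri) A" by (simp add: upset_image_cls)
  qed
  have "upset Y Ri Y" unfolding upset_def using Ri_dom by blast
  then show "classes Y Ri \<in> rho_P Y Ri Q"
    unfolding rho_P_iff classes_eq using top_in_Q by (intro bexI[of _ Y]) auto
  show "{} \<in> rho_P Y Ri Q"
    unfolding rho_P_iff using empty_in_Q by (intro bexI[of _ "{}"]) (auto simp: upset_def)
  show "\<forall>A\<in>rho_P Y Ri Q. \<forall>B\<in>rho_P Y Ri Q. A \<inter> B \<in> rho_P Y Ri Q \<and> A \<union> B \<in> rho_P Y Ri Q \<and>
      imp_le (classes Y Ri) (rho_Ri Y Ri) A B \<in> rho_P Y Ri Q \<and>
      imp_sq (classes Y Ri) (rho_Rm Y Ri Rm) A B \<in> rho_P Y Ri Q"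
    using rho_P_closed by blast
qed

lemma vimage_cls_in_Q:
  assumes "A \<in> rho_P Y Ri Q \<union> {classes Y Ri - B | B. B \<in> rho_P Y Ri Q}"
  shows "Y \<inter> cls -` A \<in> Q"
proof -
  have "\<exists>U\<in>Q. upset Y Ri U \<and> (A = cls ` U \<or> A = classes Y Ri - cls ` U)"
    using assms by (auto simp: rho_P_iff)
  then obtain U where U: "U \<in> Q" "upset Y Ri U" and "A = cls ` U \<or> A = classes Y Ri - cls ` U"
    by blast
  moreover have "Y \<inter> cls -` (cls ` U) = U" "Y \<inter> cls -` (classes Y Ri - cls ` U) = Y - U"
    using cls_in_image_upset_iff[OF U(2)] U(2) unfolding classes_eq upset_def by blast+
  ultimately show ?thesis using Diff_in_Q by auto
qed

definition box_separators :: "'b \<Rightarrow> ('b set \<times> 'b set) set" where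
  "box_separators y = {(a, b). a \<in> Q \<and> b \<in> Q \<and> y \<in> box Y Ri a \<and> y \<notin> box Y Ri b}"

lemma top_empty_in_box_separators:
  assumes "y \<in> Y"
  shows "(Y, {}) \<in> box_separators y"
proof -
  have "y \<in> box Y Ri Y" unfolding box_def using assms Ri_dom by blast
  moreover have "box Y Ri {} = {}" using box_Ri_subset by blast
  ultimately show ?thesis unfolding box_separators_def using top_in_Q empty_in_Q by simp
qed

lemma box_separators_merge:
  assumes "(a, b) \<in> box_separators y" "(a', b') \<in> box_separators y"
  obtains a'' b'' where "(a'', b'') \<in> box_separators y"
    "box Y Ri a'' = box Y Ri a \<inter> box Y Ri a'" "box Y Ri b'' = box Y Ri b \<union> box Y Ri b'"
proof
  from assms have "a \<in> Q" "b \<in> Q" "a' \<in> Q" "b' \<in> Q"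
    "y \<in> box Y Ri a \<inter> box Y Ri a'" "y \<notin> box Y Ri b \<union> box Y Ri b'"
    unfolding box_separators_def by auto
  then show "(a \<inter> a', box Y Ri b \<union> box Y Ri b') \<in> box_separators y"
    unfolding box_separators_def by (simp add: Int_in_Q Un_in_Q box_Ri_in_Q box_Int box_Ri_Un_box)
qed (simp_all add: box_Int box_Ri_Un_box)

lemma down_directed_box_separators:
  assumes y: "y \<in> Y"
    and mono: "\<And>A A' B B'. A \<subseteq> A' \<Longrightarrow> B' \<subseteq> B \<Longrightarrow> f A B \<subseteq> f A' B'"
  shows "down_directed Y ((\<lambda>(a, b). f (box Y Ri a) (box Y Ri b)) ` box_separators y)"
  unfolding down_directed_def
proof (intro conjI ballI)
  show "(\<lambda>(a, b). f (box Y Ri a) (box Y Ri b)) ` box_separators y \<noteq> {}"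
    using top_empty_in_box_separators[OF y] by blast
  fix g g' assume "g \<in> (\<lambda>(a, b). f (box Y Ri a) (box Y Ri b)) ` box_separators y"
    "g' \<in> (\<lambda>(a, b). f (box Y Ri a) (box Y Ri b)) ` box_separators y"
  then obtain a b a' b' where ab: "(a, b) \<in> box_separators y" "(a', b') \<in> box_separators y"
    and g: "g = f (box Y Ri a) (box Y Ri b)" "g' = f (box Y Ri a') (box Y Ri b')" by auto
  from ab obtain a'' b'' where ab'': "(a'', b'') \<in> box_separators y"
    and merged: "box Y Ri a'' = box Y Ri a \<inter> box Y Ri a'" "box Y Ri b'' = box Y Ri b \<union> box Y Ri b'"
    by (rule box_separators_merge)
  have "f (box Y Ri a'') (box Y Ri b'') \<subseteq> g" unfolding g merged by (rule mono) blast+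
  moreover have "f (box Y Ri a'') (box Y Ri b'') \<subseteq> g'" unfolding g merged by (rule mono) blast+
  moreover have "f (box Y Ri a'') (box Y Ri b'') \<in> (\<lambda>(a, b). f (box Y Ri a) (box Y Ri b)) ` box_separators y"
    using ab'' by (rule rev_image_eqI) simp
  ultimately show "\<exists>c\<in>(\<lambda>(a, b). f (box Y Ri a) (box Y Ri b)) ` box_separators y. Y \<inter> c \<subseteq> g \<inter> g'"
    by (intro bexI[of _ "f (box Y Ri a'') (box Y Ri b'')"]) auto
qed
end

subsection \<open>From descriptive S4K-frames to descriptive multimap-frames\<close>

locale descriptive_S4K_frame = S4K_frame +
  assumes descriptive: "descriptive_S4K Y Ri Rm Q"
begin

lemma Ri_tight: "x \<in> Y \<Longrightarrow> y \<in> Y \<Longrightarrow> Ri x y \<longleftrightarrow> (\<forall>a\<in>Q. x \<in> box Y Ri a \<longrightarrow> y \<in> a)"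
  using descriptive unfolding descriptive_S4K_def by (elim conjE) blast

lemma Rm_tight: "x \<in> Y \<Longrightarrow> y \<in> Y \<Longrightarrow> Rm x y \<longleftrightarrow> (\<forall>a\<in>Q. x \<in> box Y Rm a \<longrightarrow> y \<in> a)"
  using descriptive unfolding descriptive_S4K_def by (elim conjE) blast

lemma compact: "F \<subseteq> Q \<Longrightarrow> fip Y F \<Longrightarrow> Y \<inter> \<Inter>F \<noteq> {}"
  using descriptive unfolding descriptive_S4K_def by (elim conjE) blast

lemma Ri_equiv_if_box_separated:
  assumes y: "y \<in> Y" and z: "z \<in> Y"
    and sep: "\<And>a b. (a, b) \<in> box_separators y \<Longrightarrow> z \<in> box Y Ri a - box Y Ri b"
  shows "Ri y z \<and> Ri z y"
proof
  show "Ri y z"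
    unfolding Ri_tight[OF y z]
  proof (intro ballI impI)
    fix a assume "a \<in> Q" "y \<in> box Y Ri a"
    then have "(a, {}) \<in> box_separators y"
      unfolding box_separators_def using empty_in_Q box_Ri_subset by blast
    then show "z \<in> a" using sep box_Ri_subset by blast
  qed
  show "Ri z y"
    unfolding Ri_tight[OF z y]
  proof (intro ballI impI)
    fix b assume "b \<in> Q" "z \<in> box Y Ri b"
    show "y \<in> b"
    proof (rule ccontr)
      assume "y \<notin> b"
      then have "(Y, b) \<in> box_separators y"
        using top_empty_in_box_separators[OF y] \<open>b \<in> Q\<close> box_Ri_subset
        unfolding box_separators_def by blast
      then show False using sep \<open>z \<in> box Y Ri b\<close> by blast
    qed
  qed
qed

lemma Rm_successor_in_class:
  assumes w: "w \<in> Y" and y: "y \<in> Y"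
    and avoid: "\<And>a b. (a, b) \<in> box_separators y \<Longrightarrow> w \<notin> box Y Rm ((Y - box Y Ri a) \<union> box Y Ri b)"
  shows "\<exists>z. Rm w z \<and> Ri y z \<and> Ri z y"
proof -
  define G1 where "G1 = {d \<in> Q. w \<in> box Y Rm d}"
  define G2 where "G2 = (\<lambda>(a, b). box Y Ri a - box Y Ri b) ` box_separators y"
  have "down_directed Y G1"
    unfolding G1_def using top_in_Q Int_in_Q w Rm_dom by (blast intro: down_directed_box)
  moreover have "down_directed Y G2"
    unfolding G2_def using y by (rule down_directed_box_separators) blast
  moreover have "Y \<inter> d \<inter> g \<noteq> {}" if "d \<in> G1" "g \<in> G2" for d g
  proof -
    obtain a b where ab: "(a, b) \<in> box_separators y" "g = box Y Ri a - box Y Ri b"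
      using \<open>g \<in> G2\<close> unfolding G2_def by auto
    then obtain z where "Rm w z" "z \<notin> (Y - box Y Ri a) \<union> box Y Ri b"
      using avoid[OF ab(1)] w unfolding box_def by blast
    moreover have "z \<in> d" using \<open>Rm w z\<close> \<open>d \<in> G1\<close> unfolding G1_def box_def by blast
    ultimately have "z \<in> Y \<inter> d \<inter> g" using Rm_dom ab(2) by blast
    then show ?thesis by blast
  qed
  ultimately have "fip Y (G1 \<union> G2)" by (rule fip_Un_down_directed)
  moreover have "G1 \<union> G2 \<subseteq> Q"
    unfolding G1_def G2_def box_separators_def using Diff_box_Ri_in_Q by auto
  ultimately obtain z where z: "z \<in> Y" "z \<in> \<Inter>(G1 \<union> G2)" using compact by blast
  have "Rm w z" using Rm_tight[OF w z(1)] z(2) unfolding G1_def by blast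
  moreover have "Ri y z \<and> Ri z y"
  proof (rule Ri_equiv_if_box_separated[OF y z(1)])
    fix a b assume "(a, b) \<in> box_separators y"
    then have "box Y Ri a - box Y Ri b \<in> G2" unfolding G2_def by (rule rev_image_eqI) simp
    then show "z \<in> box Y Ri a - box Y Ri b" using z(2) by blast
  qed
  ultimately show ?thesis by blast
qed

text \<open>If the claim failed, the boxes around \<open>x\<close> and the complements of all clauses would have
  the finite intersection property; compactness gives an \<open>R\<^sub>i\<close>-successor \<open>w\<close> of \<open>x\<close> outside all
  clauses, and a second compactness argument an \<open>R\<^sub>m\<close>-successor of \<open>w\<close> equivalent to \<open>y\<close>.\<close>
lemma Rm_star_refined:
  assumes x: "x \<in> Y" and y: "y \<in> Y"
    and not_Rm_star: "\<not> (\<exists>z. Ri z y \<and> Ri y z \<and> Rm_star Ri Rm x z)"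
  shows "\<exists>(a, b)\<in>box_separators y. x \<in> box Y Ri (box Y Rm ((Y - box Y Ri a) \<union> box Y Ri b))"
proof -
  define clause where "clause A B = box Y Rm ((Y - A) \<union> B)" for A B
  define F1 where "F1 = {c \<in> Q. x \<in> box Y Ri c}"
  define F2 where "F2 = (\<lambda>(a, b). Y - clause (box Y Ri a) (box Y Ri b)) ` box_separators y"
  have clause_anti: "clause A' B' \<subseteq> clause A B" if "A \<subseteq> A'" "B' \<subseteq> B" for A A' B B'
    unfolding clause_def using that by (intro box_mono) blast
  have "down_directed Y F1"
    unfolding F1_def using top_in_Q Int_in_Q x Ri_dom by (blast intro: down_directed_box)
  moreover have "down_directed Y F2"
    unfolding F2_def using y by (rule down_directed_box_separators) (use clause_anti in blast)
  moreover have "\<not> fip Y (F1 \<union> F2)"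
  proof
    assume "fip Y (F1 \<union> F2)"
    moreover have "F1 \<union> F2 \<subseteq> Q"
      unfolding F1_def F2_def clause_def box_separators_def
      using Diff_in_Q box_Rm_in_Q Un_in_Q box_Ri_in_Q by auto
    ultimately obtain w where w: "w \<in> Y" "w \<in> \<Inter>(F1 \<union> F2)" using compact by blast
    have "Ri x w" using Ri_tight[OF x w(1)] w(2) unfolding F1_def by blast
    moreover obtain z where "Rm w z" "Ri y z" "Ri z y"
    proof -
      have "w \<notin> clause (box Y Ri a) (box Y Ri b)" if "(a, b) \<in> box_separators y" for a b
        using w(2) that unfolding F2_def by blast
      then show thesis using Rm_successor_in_class[OF w(1) y] that unfolding clause_def by blast
    qed
    ultimately show False using not_Rm_star unfolding Rm_star_def by blast
  qed
  ultimately obtain c g where "c \<in> F1" "g \<in> F2" and disjoint: "Y \<inter> c \<inter> g = {}"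
    using fip_Un_down_directed by blast
  then obtain a b where ab: "(a, b) \<in> box_separators y" "g = Y - clause (box Y Ri a) (box Y Ri b)"
    unfolding F2_def by auto
  have "x \<in> box Y Ri c" using \<open>c \<in> F1\<close> unfolding F1_def by blast
  moreover have "Y \<inter> c \<subseteq> clause (box Y Ri a) (box Y Ri b)" using disjoint ab(2) by blast
  ultimately have "x \<in> box Y Ri (clause (box Y Ri a) (box Y Ri b))" unfolding box_def using Ri_dom by blast
  then show ?thesis using ab unfolding clause_def by blast
qed

lemma compact_rho:
  assumes F: "F \<subseteq> rho_P Y Ri Q \<union> {classes Y Ri - A | A. A \<in> rho_P Y Ri Q}"
    and fip: "fip (classes Y Ri) F"
  shows "classes Y Ri \<inter> \<Inter>F \<noteq> {}"
proof -
  let ?G = "(\<lambda>A. Y \<inter> cls -` A) ` F"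
  have "?G \<subseteq> Q" using vimage_cls_in_Q F by blast
  moreover have "fip Y ?G" using fip_vimage fip unfolding classes_eq by blast
  ultimately obtain y where "y \<in> Y" "y \<in> \<Inter>?G" using compact by blast
  then have "cls y \<in> classes Y Ri \<inter> \<Inter>F" unfolding classes_eq by blast
  then show ?thesis by blast
qed

lemma rho_Ri_refined:
  assumes "c \<in> classes Y Ri" "d \<in> classes Y Ri" "\<not> rho_Ri Y Ri c d"
  shows "\<exists>A\<in>rho_P Y Ri Q. c \<in> A \<and> d \<notin> A"
proof -
  obtain x y where xy: "x \<in> Y" "y \<in> Y" "c = cls x" "d = cls y"
    using assms(1,2) unfolding classes_eq by blast
  then have "\<not> Ri x y" using assms(3) rho_Ri_cls_iff by blast
  then obtain a where a: "a \<in> Q" "x \<in> box Y Ri a" "y \<notin> a" using Ri_tight[OF xy(1,2)] by blast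
  have "cls ` box Y Ri a \<in> rho_P Y Ri Q" unfolding rho_P_def using a(1) by blast
  moreover have "c \<in> cls ` box Y Ri a" using a(2) xy(3) by blast
  moreover have "d \<notin> cls ` box Y Ri a"
    using a(3) box_Ri_subset cls_in_image_upset_iff[OF upset_box_Ri xy(2)] xy(4) by blast
  ultimately show ?thesis by blast
qed

lemma rho_Rm_refined:
  assumes "c \<in> classes Y Ri" "d \<in> classes Y Ri" "\<not> rho_Rm Y Ri Rm c d"
  shows "\<exists>A\<in>rho_P Y Ri Q. \<exists>B\<in>rho_P Y Ri Q.
    c \<in> imp_sq (classes Y Ri) (rho_Rm Y Ri Rm) A B \<and> d \<in> A \<and> d \<notin> B"
proof -
  obtain x y where xy: "x \<in> Y" "y \<in> Y" "c = cls x" "d = cls y"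
    using assms(1,2) unfolding classes_eq by blast
  then have "\<not> (\<exists>z. Ri z y \<and> Ri y z \<and> Rm_star Ri Rm x z)" using assms(3) rho_Rm_cls_iff by blast
  then obtain a b where ab: "(a, b) \<in> box_separators y"
    and x: "x \<in> box Y Ri (box Y Rm ((Y - box Y Ri a) \<union> box Y Ri b))"
    using Rm_star_refined[OF xy(1,2)] by blast
  have ab': "a \<in> Q" "b \<in> Q" "y \<in> box Y Ri a" "y \<notin> box Y Ri b"
    using ab unfolding box_separators_def by auto
  have "cls ` box Y Ri a \<in> rho_P Y Ri Q" "cls ` box Y Ri b \<in> rho_P Y Ri Q"
    unfolding rho_P_def using ab'(1,2) by blast+
  moreover have "c \<in> imp_sq (classes Y Ri) (rho_Rm Y Ri Rm) (cls ` box Y Ri a) (cls ` box Y Ri b)"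
    unfolding imp_sq_image_cls[OF upset_box_Ri upset_box_Ri] using x xy(3) by blast
  moreover have "d \<in> cls ` box Y Ri a" "d \<notin> cls ` box Y Ri b"
    using ab'(3,4) cls_in_image_upset_iff[OF upset_box_Ri xy(2)] xy(4) by simp_all
  ultimately show ?thesis by blast
qed

lemma descriptive_mframe_rho:
  "descriptive_mframe (classes Y Ri) (rho_Ri Y Ri) (rho_Rm Y Ri Rm) (rho_P Y Ri Q)"
  unfolding descriptive_mframe_def
proof (intro conjI allI impI ballI)
  show "classes Y Ri \<inter> \<Inter>F \<noteq> {}"
    if "F \<subseteq> rho_P Y Ri Q \<union> {classes Y Ri - A | A. A \<in> rho_P Y Ri Q} \<and> fip (classes Y Ri) F" for F
    using that compact_rho by blast
qed (simp_all add: general_mframe_rho rho_Ri_refined rho_Rm_refined)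

end

theorem proposition4p10:
  fixes X :: "'a set" and le sq :: "'a \<Rightarrow> 'a \<Rightarrow> bool" and P :: "'a set set"
    and Y :: "'b set" and Ri Rm :: "'b \<Rightarrow> 'b \<Rightarrow> bool" and Q :: "'b set set"
  shows "(descriptive_mframe X le sq P \<longrightarrow> descriptive_S4K X le sq (sigma_hat X P)) \<and>
         (descriptive_S4K Y Ri Rm Q \<longrightarrow>
            descriptive_mframe (classes Y Ri) (rho_Ri Y Ri) (rho_Rm Y Ri Rm) (rho_P Y Ri Q))"
proof (intro conjI impI)
  assume "descriptive_mframe X le sq P"
  then interpret descriptive_mframe_frame X le sq P
    by unfold_locales (simp_all add: descriptive_mframe_def)
  show "descriptive_S4K X le sq (sigma_hat X P)" by (rule descriptive_S4K_sigma_hat)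
next
  assume "descriptive_S4K Y Ri Rm Q"
  then interpret descriptive_S4K_frame Y Ri Rm Q
    by unfold_locales (simp_all add: descriptive_S4K_def)
  show "descriptive_mframe (classes Y Ri) (rho_Ri Y Ri) (rho_Rm Y Ri Rm) (rho_P Y Ri Q)"
    by (rule descriptive_mframe_rho)
qed

end
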